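(* Let $G_{\max}>0$ and $\mu>0$ be real constants, and let $N_r\ge 1$ and $N_t\ge 2$ be integers. Let $\Delta G_{1},\dots,\Delta G_{2N_t}$ be i.i.d. half-normal random variables, $\Delta G_j\sim|\mathcal{N}(0,G_{\max}^2/9)|$ (i.e. $\Delta G_j=|Z_j|$ with $Z_j\sim\mathcal{N}(0,G_{\max}^2/9)$), and set $T_j=\Delta G_j/\mu$ for $j=1,\dots,2N_t$. Define the row latency $T^{\mathsf{row}}=\max_{1\le j\le 2N_t}T_j$ and the expected write latency $T_{\mathsf{write}}=2N_r\,\mathbb{E}[T^{\mathsf{row}}]$. Then $$T_{\mathsf{write}}\le \frac{2\sqrt{2}\,G_{\max}}{3\mu}\,N_r\left(\sqrt{\ln N_t}+\frac{1}{\sqrt{\pi}\,\ln N_t}\right).$$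
   Context: Interpretation (model from the paper): a real-mapped $N_r\times N_t$ complex Rayleigh-fading channel matrix (a $2N_r\times 2N_t$ real matrix whose entries are $\mathcal{N}(0,G_{\max}^2/9)$, scaled by the three-sigma rule into conductance range $[-G_{\max},G_{\max}]$) is written row by row into a fully reset one-transistor-one-resistor RRAM array using differential device pairs; each device's conductance must increase by $\Delta G_j$, the magnitude of its target entry. Under the write-without-verification scheme the conductance grows at deterministic rate $\mu$ (in expectation), so writing a device takes time $\Delta G_j/\mu$; a row takes the maximum of its $2N_t$ device times, and the real-mapped matrix consists of two identical processes of $N_r$ rows each, giving $T_{\mathsf{write}}=2N_r\mathbb{E}[T^{\mathsf{row}}]$. *)

theory Defs
  imports "HOL-Probability.Probability"
begin

definition row_latency :: "real \<Rightarrow> nat \<Rightarrow> (nat \<Rightarrow> 'a \<Rightarrow> real) \<Rightarrow> 'a \<Rightarrow> real" where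
  "row_latency \<mu> Nt Z \<omega> = Max ((\<lambda>j. \<bar>Z j \<omega>\<bar> / \<mu>) ` {..<2 * Nt})"

end

theory Submission
  imports Defs "HOL-Real_Asymp.Real_Asymp"
begin

text \<open>For every threshold \<open>t\<close>, \<open>max\<^sub>j |Z\<^sub>j| \<le> t + \<Sum>\<^sub>j (|Z\<^sub>j| - t)\<^sup>+\<close>, so by linearity of
  expectation alone the expected maximum of \<open>n\<close> variables is at
  most \<open>t\<close> plus \<open>n\<close> times a single expected excess. For \<open>Z \<sim> N(0, \<sigma>\<^sup>2)\<close> with density \<open>\<phi>\<close>,
  the integrand \<open>(x - t) \<phi>(x)\<close> on \<open>[t, \<infinity>)\<close> is dominated by the derivative of
  \<open>-\<phi>(x) (\<sigma>\<^sup>4/t\<^sup>2 + \<sigma>\<^sup>2 (x - t)/t)\<close>, which gives \<open>E (|Z| - t)\<^sup>+ \<le> 2 \<sigma>\<^sup>4 \<phi>(t) / t\<^sup>2\<close>.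
  The choice \<open>t = \<sigma> \<surd>(2 ln N\<^sub>t)\<close> makes \<open>\<phi>(t) = 1 / (\<surd>(2\<pi>) \<sigma> N\<^sub>t)\<close>, and the two terms
  become the two summands of the bound.\<close>

lemma Max_le_threshold_plus_sum_excess:
  fixes f :: "'b \<Rightarrow> real"
  assumes "finite I" "I \<noteq> {}"
  shows "Max (f ` I) \<le> t + (\<Sum>i\<in>I. max 0 (f i - t))"
proof -
  have "f i \<le> t + (\<Sum>i\<in>I. max 0 (f i - t))" if "i \<in> I" for i
  proof -
    have "max 0 (f i - t) \<le> (\<Sum>i\<in>I. max 0 (f i - t))"
      using assms(1) that by (intro member_le_sum) auto
    then show ?thesis by linarith
  qed
  then show ?thesis using assms by simp
qed

lemma (in prob_space) expectation_Max_le_threshold_plus_excess: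
  fixes X :: "'b \<Rightarrow> 'a \<Rightarrow> real" and t B :: real
  assumes I: "finite I" "I \<noteq> {}" and "t \<ge> 0" "B \<ge> 0"
    and X: "\<And>i. i \<in> I \<Longrightarrow> X i \<in> borel_measurable M"
    and excess: "\<And>i. i \<in> I \<Longrightarrow> (\<integral>\<^sup>+\<omega>. ennreal (max 0 (X i \<omega> - t)) \<partial>M) \<le> ennreal B"
  shows "expectation (\<lambda>\<omega>. Max ((\<lambda>i. X i \<omega>) ` I)) \<le> t + card I * B"
proof (rule integral_real_bounded)
  have excess_measurable: "(\<lambda>\<omega>. ennreal (max 0 (X i \<omega> - t))) \<in> borel_measurable M" if "i \<in> I" for i
    using X[OF that] by measurable
  have "(\<integral>\<^sup>+\<omega>. ennreal (Max ((\<lambda>i. X i \<omega>) ` I)) \<partial>M)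
      \<le> (\<integral>\<^sup>+\<omega>. ennreal t + (\<Sum>i\<in>I. ennreal (max 0 (X i \<omega> - t))) \<partial>M)"
  proof (rule nn_integral_mono)
    fix \<omega>
    have sum_eq: "(\<Sum>i\<in>I. ennreal (max 0 (X i \<omega> - t))) = ennreal (\<Sum>i\<in>I. max 0 (X i \<omega> - t))"
      by (rule sum_ennreal) simp
    have "ennreal (Max ((\<lambda>i. X i \<omega>) ` I)) \<le> ennreal (t + (\<Sum>i\<in>I. max 0 (X i \<omega> - t)))"
      using Max_le_threshold_plus_sum_excess[OF I] by (rule ennreal_leI)
    also have "\<dots> = ennreal t + (\<Sum>i\<in>I. ennreal (max 0 (X i \<omega> - t)))"
      unfolding sum_eq using \<open>t \<ge> 0\<close> by (rule ennreal_plus) (simp add: sum_nonneg)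
    finally show "ennreal (Max ((\<lambda>i. X i \<omega>) ` I)) \<le> \<dots>" .
  qed
  also have "\<dots> = (\<integral>\<^sup>+\<omega>. ennreal t \<partial>M) + (\<integral>\<^sup>+\<omega>. (\<Sum>i\<in>I. ennreal (max 0 (X i \<omega> - t))) \<partial>M)"
    by (intro nn_integral_add borel_measurable_sum borel_measurable_const excess_measurable) auto
  also have "\<dots> = ennreal t + (\<Sum>i\<in>I. \<integral>\<^sup>+\<omega>. ennreal (max 0 (X i \<omega> - t)) \<partial>M)"
    by (subst nn_integral_sum[OF excess_measurable]) (auto simp: emeasure_space_1)
  also have "\<dots> \<le> ennreal t + (\<Sum>i\<in>I. ennreal B)"
    using excess by (intro add_left_mono sum_mono) auto
  also have "\<dots> = ennreal (t + card I * B)"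
    using \<open>t \<ge> 0\<close> \<open>B \<ge> 0\<close> by (simp add: ennreal_plus ennreal_mult ennreal_of_nat_eq_real_of_nat)
  finally show "(\<integral>\<^sup>+\<omega>. ennreal (Max ((\<lambda>i. X i \<omega>) ` I)) \<partial>M) \<le> ennreal (t + card I * B)" .
  show "0 \<le> t + card I * B" using \<open>t \<ge> 0\<close> \<open>B \<ge> 0\<close> by simp
qed

lemma has_real_derivative_normal_density:
  fixes m \<sigma> x :: real
  shows "(normal_density m \<sigma> has_real_derivative - (x - m) / \<sigma>\<^sup>2 * normal_density m \<sigma> x) (at x)"
proof -
  have "((\<lambda>x. - (x - m)\<^sup>2) has_real_derivative - (2 * (x - m))) (at x)"
    by (auto intro!: derivative_eq_intros)
  then have "((\<lambda>x. - (x - m)\<^sup>2 / (2 * \<sigma>\<^sup>2)) has_real_derivative - (x - m) / \<sigma>\<^sup>2) (at x)"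
    by (rule DERIV_cong[OF DERIV_cdivide]) (auto simp: divide_simps)
  then show ?thesis
    unfolding normal_density_def by (rule DERIV_cong[OF DERIV_cmult[OF DERIV_fun_exp]]) (simp add: mult_ac)
qed

lemma nn_integral_normal_density_excess_le:
  fixes \<sigma> t :: real
  assumes "\<sigma> > 0" "t > 0"
  shows "(\<integral>\<^sup>+x. ennreal (normal_density 0 \<sigma> x * max 0 (x - t)) \<partial>lborel)
         \<le> ennreal (\<sigma>^4 / t\<^sup>2 * normal_density 0 \<sigma> t)"
proof -
  define p where "p x = \<sigma>^4 / t\<^sup>2 + \<sigma>\<^sup>2 * (x - t) / t" for x
  define F where "F x = - normal_density 0 \<sigma> x * p x" for x
  define g where "g x = normal_density 0 \<sigma> x * (x * p x / \<sigma>\<^sup>2 - \<sigma>\<^sup>2 / t)" for x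
  have dominates: "x - t \<le> x * p x / \<sigma>\<^sup>2 - \<sigma>\<^sup>2 / t" if "t \<le> x" for x
  proof -
    have "x * p x / \<sigma>\<^sup>2 - \<sigma>\<^sup>2 / t - (x - t) = (x - t) * (\<sigma>\<^sup>2 / t\<^sup>2 + (x - t) / t)"
      using assms by (simp add: p_def field_simps power2_eq_square power4_eq_xxxx)
    also have "\<dots> \<ge> 0" using that assms by (intro mult_nonneg_nonneg add_nonneg_nonneg) auto
    finally show ?thesis by simp
  qed
  have "(\<integral>\<^sup>+x. ennreal (normal_density 0 \<sigma> x * max 0 (x - t)) \<partial>lborel)
        \<le> (\<integral>\<^sup>+x. ennreal (g x) * indicator {t..} x \<partial>lborel)"
  proof (rule nn_integral_mono)
    fix x
    show "ennreal (normal_density 0 \<sigma> x * max 0 (x - t)) \<le> ennreal (g x) * indicator {t..} x"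
    proof (cases "t \<le> x")
      case True
      then show ?thesis
        using dominates[OF True] by (auto simp: g_def intro!: ennreal_leI mult_left_mono)
    qed simp
  qed
  also have "\<dots> = ennreal (0 - F t)"
  proof (rule nn_integral_FTC_atLeast)
    show "g \<in> borel_measurable borel" unfolding g_def p_def by measurable
    show "(F has_real_derivative g x) (at x)" for x
      unfolding F_def g_def p_def using assms
      by (auto intro!: derivative_eq_intros has_real_derivative_normal_density) (simp add: field_simps)
    show "0 \<le> g x" if "t \<le> x" for x
      using dominates[OF that] that by (simp add: g_def)
    show "(F \<longlongrightarrow> 0) at_top"
      unfolding F_def p_def normal_density_def using assms by real_asymp
  qed
  also have "0 - F t = \<sigma>^4 / t\<^sup>2 * normal_density 0 \<sigma> t"
    by (simp add: F_def p_def)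
  finally show ?thesis .
qed

lemma nn_integral_normal_density_abs_excess_le:
  fixes \<sigma> t :: real
  assumes "\<sigma> > 0" "t > 0"
  shows "(\<integral>\<^sup>+x. ennreal (normal_density 0 \<sigma> x * max 0 (\<bar>x\<bar> - t)) \<partial>lborel)
         \<le> ennreal (2 * \<sigma>^4 / t\<^sup>2 * normal_density 0 \<sigma> t)"
proof -
  define f where "f x = ennreal (normal_density 0 \<sigma> x * max 0 (x - t))" for x
  have f_borel[measurable]: "f \<in> borel_measurable borel" unfolding f_def by measurable
  have abs_excess_split: "ennreal (normal_density 0 \<sigma> x * max 0 (\<bar>x\<bar> - t)) = f x + f (- x)" for x
  proof (cases "x \<ge> 0")
    case True
    then show ?thesis using \<open>t > 0\<close> by (simp add: f_def max_def)
  next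
    case False
    then show ?thesis using \<open>t > 0\<close> by (simp add: f_def max_def normal_density_def)
  qed
  have "(\<integral>\<^sup>+x. ennreal (normal_density 0 \<sigma> x * max 0 (\<bar>x\<bar> - t)) \<partial>lborel)
      = (\<integral>\<^sup>+x. f x \<partial>lborel) + (\<integral>\<^sup>+x. f (- x) \<partial>lborel)"
    unfolding abs_excess_split by (intro nn_integral_add) auto
  also have "(\<integral>\<^sup>+x. f (- x) \<partial>lborel) = (\<integral>\<^sup>+x. f x \<partial>lborel)"
    using nn_integral_real_affine[OF f_borel, of "-1" 0] by simp
  also have "(\<integral>\<^sup>+x. f x \<partial>lborel) \<le> ennreal (\<sigma>^4 / t\<^sup>2 * normal_density 0 \<sigma> t)"
    unfolding f_def using assms by (rule nn_integral_normal_density_excess_le)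
  finally have "(\<integral>\<^sup>+x. ennreal (normal_density 0 \<sigma> x * max 0 (\<bar>x\<bar> - t)) \<partial>lborel)
      \<le> ennreal (\<sigma>^4 / t\<^sup>2 * normal_density 0 \<sigma> t) + ennreal (\<sigma>^4 / t\<^sup>2 * normal_density 0 \<sigma> t)"
    by (simp add: add_mono)
  also have "\<dots> = ennreal (2 * \<sigma>^4 / t\<^sup>2 * normal_density 0 \<sigma> t)"
    by (simp flip: ennreal_plus)
  finally show ?thesis .
qed

lemma distributed_normal_nn_integral_abs_excess_le:
  fixes \<sigma> t :: real
  assumes X: "distributed M lborel X (normal_density 0 \<sigma>)" and "\<sigma> > 0" "t > 0"
  shows "(\<integral>\<^sup>+\<omega>. ennreal (max 0 (\<bar>X \<omega>\<bar> - t)) \<partial>M)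
         \<le> ennreal (2 * \<sigma>^4 / t\<^sup>2 * normal_density 0 \<sigma> t)"
proof -
  have "(\<integral>\<^sup>+\<omega>. ennreal (max 0 (\<bar>X \<omega>\<bar> - t)) \<partial>M)
      = (\<integral>\<^sup>+x. ennreal (normal_density 0 \<sigma> x * max 0 (\<bar>x\<bar> - t)) \<partial>lborel)"
    using distributed_nn_integral[OF X, of "\<lambda>x. ennreal (max 0 (\<bar>x\<bar> - t))"]
    by (simp add: ennreal_mult)
  also have "\<dots> \<le> ennreal (2 * \<sigma>^4 / t\<^sup>2 * normal_density 0 \<sigma> t)"
    using assms(2,3) by (rule nn_integral_normal_density_abs_excess_le)
  finally show ?thesis .
qed

lemma threshold_plus_gaussian_excess_eq:
  fixes \<sigma> N t :: real
  assumes "\<sigma> > 0" "N > 1" and t: "t = \<sigma> * sqrt (2 * ln N)"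
  shows "t + 2 * N * (2 * \<sigma>^4 / t\<^sup>2 * normal_density 0 \<sigma> t)
         = sqrt 2 * \<sigma> * (sqrt (ln N) + 1 / (sqrt pi * ln N))"
proof -
  have L: "ln N > 0" using assms by simp
  have t2: "t\<^sup>2 = 2 * ln N * \<sigma>\<^sup>2" using t L by (simp add: power_mult_distrib)
  have "exp (- t\<^sup>2 / (2 * \<sigma>\<^sup>2)) = 1 / N" using t2 assms by (simp add: exp_minus inverse_eq_divide)
  moreover have "sqrt (2 * pi * \<sigma>\<^sup>2) = sqrt 2 * sqrt pi * \<sigma>" using assms by (simp add: real_sqrt_mult)
  ultimately have density: "normal_density 0 \<sigma> t = 1 / (sqrt 2 * sqrt pi * \<sigma> * N)"
    unfolding normal_density_def by simp
  have "2 * N * (2 * \<sigma>^4 / t\<^sup>2 * normal_density 0 \<sigma> t) = sqrt 2 * sqrt 2 * \<sigma> / (sqrt 2 * sqrt pi * ln N)"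
    unfolding density t2 using assms L by (simp add: field_simps power2_eq_square power4_eq_xxxx)
  also have "\<dots> = sqrt 2 * \<sigma> / (sqrt pi * ln N)"
    by (simp only: mult.assoc mult_divide_mult_cancel_left_if) simp
  finally show ?thesis using t by (simp add: real_sqrt_mult field_simps)
qed

lemma row_latency_eq_Max_divide:
  assumes "\<mu> > 0" "Nt > 0"
  shows "row_latency \<mu> Nt Z = (\<lambda>\<omega>. Max ((\<lambda>j. \<bar>Z j \<omega>\<bar>) ` {..<2 * Nt}) / \<mu>)"
proof
  fix \<omega>
  have "mono (\<lambda>x::real. x / \<mu>)" unfolding mono_def using assms by (simp add: divide_right_mono)
  then have "Max ((\<lambda>x. x / \<mu>) ` (\<lambda>j. \<bar>Z j \<omega>\<bar>) ` {..<2 * Nt}) = Max ((\<lambda>j. \<bar>Z j \<omega>\<bar>) ` {..<2 * Nt}) / \<mu>"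
    using assms by (subst mono_Max_commute[symmetric]) (auto simp: lessThan_empty_iff)
  then show "row_latency \<mu> Nt Z \<omega> = Max ((\<lambda>j. \<bar>Z j \<omega>\<bar>) ` {..<2 * Nt}) / \<mu>"
    unfolding row_latency_def by (simp add: image_image)
qed

theorem theorem1:
  fixes M :: "'a measure" and Z :: "nat \<Rightarrow> 'a \<Rightarrow> real"
    and Gmax \<mu> :: real and Nr Nt :: nat
  assumes "prob_space M"
    and "Gmax > 0" and "\<mu> > 0" and "Nr \<ge> 1" and "Nt \<ge> 2"
    and "prob_space.indep_vars M (\<lambda>_. borel) Z {..<2 * Nt}"
    and "\<And>j. j < 2 * Nt \<Longrightarrow> distributed M lborel (Z j) (normal_density 0 (Gmax / 3))"
  shows "2 * real Nr * prob_space.expectation M (row_latency \<mu> Nt Z)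
         \<le> 2 * sqrt 2 * Gmax / (3 * \<mu>) * real Nr
             * (sqrt (ln (real Nt)) + 1 / (sqrt pi * ln (real Nt)))"
proof -
  interpret prob_space M by fact
  define \<sigma> where "\<sigma> = Gmax / 3"
  define t where "t = \<sigma> * sqrt (2 * ln (real Nt))"
  define B where "B = 2 * \<sigma>^4 / t\<^sup>2 * normal_density 0 \<sigma> t"
  have "\<sigma> > 0" "t > 0" "B \<ge> 0" using assms(2,5) by (simp_all add: \<sigma>_def t_def B_def)
  have "expectation (row_latency \<mu> Nt Z) = expectation (\<lambda>\<omega>. Max ((\<lambda>j. \<bar>Z j \<omega>\<bar>) ` {..<2 * Nt})) / \<mu>"
    using assms(3,5) by (simp add: row_latency_eq_Max_divide)
  also have "expectation (\<lambda>\<omega>. Max ((\<lambda>j. \<bar>Z j \<omega>\<bar>) ` {..<2 * Nt})) \<le> t + card {..<2 * Nt} * B"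
  proof (rule expectation_Max_le_threshold_plus_excess)
    fix j assume "j \<in> {..<2 * Nt}"
    then have Zj: "distributed M lborel (Z j) (normal_density 0 \<sigma>)"
      using assms(7) by (simp add: \<sigma>_def)
    show "(\<lambda>\<omega>. \<bar>Z j \<omega>\<bar>) \<in> borel_measurable M"
      using distributed_measurable[OF Zj] by simp
    show "(\<integral>\<^sup>+\<omega>. ennreal (max 0 (\<bar>Z j \<omega>\<bar> - t)) \<partial>M) \<le> ennreal B"
      unfolding B_def using Zj \<open>\<sigma> > 0\<close> \<open>t > 0\<close> by (rule distributed_normal_nn_integral_abs_excess_le)
  qed (use assms(5) \<open>t > 0\<close> \<open>B \<ge> 0\<close> in \<open>auto simp: lessThan_empty_iff\<close>)
  also have "t + card {..<2 * Nt} * B = sqrt 2 * \<sigma> * (sqrt (ln Nt) + 1 / (sqrt pi * ln Nt))"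
    using threshold_plus_gaussian_excess_eq[OF \<open>\<sigma> > 0\<close> _ t_def] assms(5) by (simp add: B_def)
  finally have "expectation (row_latency \<mu> Nt Z)
      \<le> sqrt 2 * \<sigma> * (sqrt (ln Nt) + 1 / (sqrt pi * ln Nt)) / \<mu>"
    using assms(3) by (simp add: divide_right_mono)
  then have "2 * real Nr * expectation (row_latency \<mu> Nt Z)
      \<le> 2 * real Nr * (sqrt 2 * \<sigma> * (sqrt (ln Nt) + 1 / (sqrt pi * ln Nt)) / \<mu>)"
    by (rule mult_left_mono) simp
  then show ?thesis by (simp add: \<sigma>_def field_simps)
qed

end
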